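(* Let $L$ be an interval locale with top element $1$, and for a presheaf $F$ on $L$ and $x\in L\setminus\{1\}$ set $F_x=\varinjlim_{x<s}F(s)$. Then: (1) the associated sheaf map $\eta:F\to L^2F$ induces bijections $F_x\to(L^2F)_x$ for all $x\in L\setminus\{1\}$; (2) a map $E\to F$ of presheaves on $L$ induces bijections $E_x\to F_x$ for all $x\in L\setminus\{1\}$ if and only if the induced map $L^2E\to L^2F$ of associated sheaves is an isomorphism.
   Context: A locale $L$ is a complete lattice in which finite meets distribute over arbitrary joins, with Grothendieck topology: $\{b_j\le a\}$ covers $a$ iff $\bigvee_j b_j=a$; presheaves are functors $L^{op}\to\mathbf{Set}$, sheaves are presheaves $F$ with $F(a)\to\varprojlim_{b\in R}F(b)$ bijective for all covering sieves $R$ of $a$. $L$ is an interval if it is totally ordered and densely ordered ($a<b$ implies some $s$ with $a<s<b$). $L^2$ denotes the associated sheaf functor from presheaves to sheaves on $L$ and $\eta:F\to L^2F$ the canonical map. *)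

theory Defs
  imports Main
begin

text \<open>The locale L is modelled as a type 'a of class complete_linorder (a totally ordered
complete lattice, hence automatically a frame) which is also dense_order.
A presheaf on L is a pair (P, R): P a is the set of sections over a, and
R a b : P a -> P b is restriction for b <= a.\<close>

type_synonym ('a, 'b) psh = "('a \<Rightarrow> 'b set) \<times> ('a \<Rightarrow> 'a \<Rightarrow> 'b \<Rightarrow> 'b)"

definition presheaf :: "('a::order, 'b) psh \<Rightarrow> bool" where
  "presheaf F \<longleftrightarrow>
     (\<forall>a b u. b \<le> a \<longrightarrow> u \<in> fst F a \<longrightarrow> snd F a b u \<in> fst F b) \<and>
     (\<forall>a u. u \<in> fst F a \<longrightarrow> snd F a a u = u) \<and>
     (\<forall>a b c u. c \<le> b \<longrightarrow> b \<le> a \<longrightarrow> u \<in> fst F a \<longrightarrow>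
        snd F b c (snd F a b u) = snd F a c u)"

definition nat_trans :: "('a::order, 'b) psh \<Rightarrow> ('a, 'c) psh \<Rightarrow> ('a \<Rightarrow> 'b \<Rightarrow> 'c) \<Rightarrow> bool" where
  "nat_trans F G f \<longleftrightarrow> presheaf F \<and> presheaf G \<and>
     (\<forall>a u. u \<in> fst F a \<longrightarrow> f a u \<in> fst G a) \<and>
     (\<forall>a b u. b \<le> a \<longrightarrow> u \<in> fst F a \<longrightarrow> f b (snd F a b u) = snd G a b (f a u))"

definition psh_iso :: "('a::order, 'b) psh \<Rightarrow> ('a, 'c) psh \<Rightarrow> ('a \<Rightarrow> 'b \<Rightarrow> 'c) \<Rightarrow> bool" where
  "psh_iso F G f \<longleftrightarrow> nat_trans F G f \<and>
     (\<exists>g. nat_trans G F g \<and> (\<forall>a u. u \<in> fst F a \<longrightarrow> g a (f a u) = u) \<and>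
          (\<forall>a v. v \<in> fst G a \<longrightarrow> f a (g a v) = v))"

definition sieve :: "'a::complete_lattice \<Rightarrow> 'a set \<Rightarrow> bool" where
  "sieve a S \<longleftrightarrow> S \<subseteq> {..a} \<and> (\<forall>b\<in>S. \<forall>c. c \<le> b \<longrightarrow> c \<in> S)"

definition covering :: "'a::complete_lattice \<Rightarrow> 'a set \<Rightarrow> bool" where
  "covering a S \<longleftrightarrow> sieve a S \<and> Sup S = a"

text \<open>Matching families for F on a covering sieve of a, encoded as partial functions
whose domain is the sieve.\<close>

definition mdom :: "('a \<Rightarrow> 'b option) \<Rightarrow> 'a set" where
  "mdom x = {b. x b \<noteq> None}"

definition matching :: "('a::complete_lattice, 'b) psh \<Rightarrow> 'a \<Rightarrow> ('a \<Rightarrow> 'b option) \<Rightarrow> bool" where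
  "matching F a x \<longleftrightarrow> covering a (mdom x) \<and>
     (\<forall>b\<in>mdom x. the (x b) \<in> fst F b) \<and>
     (\<forall>b\<in>mdom x. \<forall>c. c \<le> b \<longrightarrow> snd F b c (the (x b)) = the (x c))"

text \<open>Two matching families are identified in the colimit over covering sieves iff they
agree on a common smaller covering sieve.\<close>

definition mf_eq :: "'a::complete_lattice \<Rightarrow> ('a \<Rightarrow> 'b option) \<Rightarrow> ('a \<Rightarrow> 'b option) \<Rightarrow> bool" where
  "mf_eq a x y \<longleftrightarrow> (\<exists>T. covering a T \<and> T \<subseteq> mdom x \<inter> mdom y \<and> (\<forall>b\<in>T. x b = y b))"

definition mf_class :: "('a::complete_lattice, 'b) psh \<Rightarrow> 'a \<Rightarrow> ('a \<Rightarrow> 'b option) \<Rightarrow> ('a \<Rightarrow> 'b option) set" where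
  "mf_class F a x = {y. matching F a y \<and> mf_eq a x y}"

text \<open>The plus construction L F: L F (a) = colim over covering sieves R of a of lim_{b in R} F(b).\<close>

definition plus_obj :: "('a::complete_lattice, 'b) psh \<Rightarrow> 'a \<Rightarrow> ('a \<Rightarrow> 'b option) set set" where
  "plus_obj F a = {X. \<exists>x. matching F a x \<and> X = mf_class F a x}"

definition mf_res :: "'a::order \<Rightarrow> ('a \<Rightarrow> 'b option) \<Rightarrow> ('a \<Rightarrow> 'b option)" where
  "mf_res b x = (\<lambda>c. if c \<le> b then x c else None)"

definition plus_res :: "('a::complete_lattice, 'b) psh \<Rightarrow> 'a \<Rightarrow> 'a \<Rightarrow>
    ('a \<Rightarrow> 'b option) set \<Rightarrow> ('a \<Rightarrow> 'b option) set" where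
  "plus_res F a b X = (\<Union>x\<in>X. mf_class F b (mf_res b x))"

definition Lplus :: "('a::complete_lattice, 'b) psh \<Rightarrow> ('a, ('a \<Rightarrow> 'b option) set) psh" where
  "Lplus F = (plus_obj F, plus_res F)"

definition plus_unit :: "('a::complete_lattice, 'b) psh \<Rightarrow> 'a \<Rightarrow> 'b \<Rightarrow> ('a \<Rightarrow> 'b option) set" where
  "plus_unit F a u = mf_class F a (\<lambda>b. if b \<le> a then Some (snd F a b u) else None)"

definition plus_map :: "('a::complete_lattice, 'c) psh \<Rightarrow> ('a \<Rightarrow> 'b \<Rightarrow> 'c) \<Rightarrow> 'a \<Rightarrow>
    ('a \<Rightarrow> 'b option) set \<Rightarrow> ('a \<Rightarrow> 'c option) set" where
  "plus_map G f a X = (\<Union>x\<in>X. mf_class G a (\<lambda>b. map_option (f b) (x b)))"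

definition L2 :: "('a::complete_lattice, 'b) psh \<Rightarrow> ('a, ('a \<Rightarrow> ('a \<Rightarrow> 'b option) set option) set) psh" where
  "L2 F = Lplus (Lplus F)"

definition eta :: "('a::complete_lattice, 'b) psh \<Rightarrow> 'a \<Rightarrow> 'b \<Rightarrow> ('a \<Rightarrow> ('a \<Rightarrow> 'b option) set option) set" where
  "eta F a u = plus_unit (Lplus F) a (plus_unit F a u)"

definition L2_map :: "('a::complete_lattice, 'c) psh \<Rightarrow> ('a \<Rightarrow> 'b \<Rightarrow> 'c) \<Rightarrow> 'a \<Rightarrow>
    ('a \<Rightarrow> ('a \<Rightarrow> 'b option) set option) set \<Rightarrow> ('a \<Rightarrow> ('a \<Rightarrow> 'c option) set option) set" where
  "L2_map G f = plus_map (Lplus G) (plus_map G f)"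

text \<open>Stalks F_x = colim_{x < s} F(s), as equivalence classes (germs) of pairs (s, u).\<close>

definition germ :: "('a::order, 'b) psh \<Rightarrow> 'a \<Rightarrow> 'a \<Rightarrow> 'b \<Rightarrow> ('a \<times> 'b) set" where
  "germ F x s u = {(t, v). x < t \<and> v \<in> fst F t \<and>
      (\<exists>r. x < r \<and> r \<le> s \<and> r \<le> t \<and> snd F s r u = snd F t r v)}"

definition stalk :: "('a::order, 'b) psh \<Rightarrow> 'a \<Rightarrow> ('a \<times> 'b) set set" where
  "stalk F x = {C. \<exists>s u. x < s \<and> u \<in> fst F s \<and> C = germ F x s u}"

definition stalk_map :: "('a::order, 'c) psh \<Rightarrow> ('a \<Rightarrow> 'b \<Rightarrow> 'c) \<Rightarrow> 'a \<Rightarrow>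
    ('a \<times> 'b) set \<Rightarrow> ('a \<times> 'c) set" where
  "stalk_map G f x C = (\<Union>(s, u)\<in>C. germ G x s (f s u))"

end

theory Submission
  imports Defs
begin

text \<open>On an interval every covering sieve of b contains all c < b, and by density these
  already cover b. So an element of L G b is determined by the values of a matching family
  strictly below b, and the unit G \<rightarrow> L G is a bijection on stalks: near x, a family is the
  unit of its own value at a stage r with x < r < b. Applying this twice gives the statement for \<eta>.

  A map inducing bijections on stalks is locally injective (sections identified by f agree on
  a smaller neighbourhood) and locally surjective (every section lifts near each point). For such
  maps L f is bijective at every stage: local lifts of a matching family agree where they overlap
  and glue to a preimage. Then L f is bijective, hence again locally injective and surjective,
  and L^2 f is an isomorphism. Conversely an isomorphism L^2 E \<cong> L^2 F is bijective on
  stalks, and naturality of \<eta> together with the first part transfers this to f.\<close>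

lemma presheaf_restrict_closed:
  "presheaf G \<Longrightarrow> b \<le> a \<Longrightarrow> u \<in> fst G a \<Longrightarrow> snd G a b u \<in> fst G b"
  unfolding presheaf_def by blast

lemma presheaf_restrict_id: "presheaf G \<Longrightarrow> u \<in> fst G a \<Longrightarrow> snd G a a u = u"
  unfolding presheaf_def by blast

lemma presheaf_restrict_comp:
  "presheaf G \<Longrightarrow> c \<le> b \<Longrightarrow> b \<le> a \<Longrightarrow> u \<in> fst G a \<Longrightarrow>
    snd G b c (snd G a b u) = snd G a c u"
  unfolding presheaf_def by blast

lemma nat_trans_presheaf_dom: "nat_trans G H h \<Longrightarrow> presheaf G"
  unfolding nat_trans_def by blast

lemma nat_trans_presheaf_cod: "nat_trans G H h \<Longrightarrow> presheaf H"
  unfolding nat_trans_def by blast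

lemma nat_trans_closed: "nat_trans G H h \<Longrightarrow> u \<in> fst G a \<Longrightarrow> h a u \<in> fst H a"
  unfolding nat_trans_def by blast

lemma nat_trans_natural:
  "nat_trans G H h \<Longrightarrow> b \<le> a \<Longrightarrow> u \<in> fst G a \<Longrightarrow> h b (snd G a b u) = snd H a b (h a u)"
  unfolding nat_trans_def by blast

lemma nat_trans_comp:
  "nat_trans G H h \<Longrightarrow> nat_trans H K k \<Longrightarrow> nat_trans G K (\<lambda>a u. k a (h a u))"
  unfolding nat_trans_def by simp

lemma nat_trans_id: "presheaf G \<Longrightarrow> nat_trans G G (\<lambda>a u. u)"
  unfolding nat_trans_def by simp

section \<open>Covering sieves of a dense complete linear order\<close>

lemma Sup_lessThan_dense: "Sup {..<(y::'a::{complete_linorder,dense_order})} = y"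
proof (rule Sup_eqI)
  fix z assume ub: "\<And>x. x \<in> {..<y} \<Longrightarrow> x \<le> z"
  show "y \<le> z"
  proof (rule ccontr)
    assume "\<not> y \<le> z"
    then obtain w where "z < w" "w < y" using dense by (metis not_le)
    with ub[of w] show False by auto
  qed
qed auto

lemma covering_lessThan_subset: "covering (b::'a::complete_linorder) T \<Longrightarrow> {..<b} \<subseteq> T"
proof
  fix c assume cov: "covering b T" and "c \<in> {..<b}"
  then have "c < Sup T" by (auto simp: covering_def)
  then obtain t where "t \<in> T" "c < t" by (auto simp: less_Sup_iff)
  with cov show "c \<in> T" by (auto simp: covering_def sieve_def)
qed

lemma covering_subset_atMost: "covering b T \<Longrightarrow> T \<subseteq> {..b}"
  by (auto simp: covering_def sieve_def)

lemma covering_lessThan: "covering (b::'a::{complete_linorder,dense_order}) {..<b}"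
  by (auto simp: covering_def sieve_def Sup_lessThan_dense)

lemma covering_atMost: "covering (b::'a::complete_linorder) {..b}"
  by (auto simp: covering_def sieve_def)

lemma matching_closed: "matching G b x \<Longrightarrow> x c \<noteq> None \<Longrightarrow> the (x c) \<in> fst G c"
  unfolding matching_def mdom_def by blast

lemma matching_restrict:
  "matching G b x \<Longrightarrow> x c' \<noteq> None \<Longrightarrow> c \<le> c' \<Longrightarrow> snd G c' c (the (x c')) = the (x c)"
  unfolding matching_def mdom_def by blast

lemma matching_downward_closed: "matching G a x \<Longrightarrow> x b \<noteq> None \<Longrightarrow> c \<le> b \<Longrightarrow> x c \<noteq> None"
  unfolding matching_def covering_def sieve_def mdom_def by blast

lemma matching_defined_below:
  "matching G (b::'a::complete_linorder) x \<Longrightarrow> c < b \<Longrightarrow> x c \<noteq> None"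
  using covering_lessThan_subset[of b "mdom x"] by (auto simp: matching_def mdom_def)

lemma matching_defined_le: "matching G b x \<Longrightarrow> x c \<noteq> None \<Longrightarrow> c \<le> b"
  using covering_subset_atMost[of b "mdom x"] by (auto simp: matching_def mdom_def)

lemma mf_eq_iff_agree_below:
  assumes "matching G (b::'a::{complete_linorder,dense_order}) x" "matching G b y"
  shows "mf_eq b x y \<longleftrightarrow> (\<forall>c<b. x c = y c)"
proof
  assume "mf_eq b x y"
  then obtain T where "covering b T" "\<forall>c\<in>T. x c = y c" by (auto simp: mf_eq_def)
  then show "\<forall>c<b. x c = y c" using covering_lessThan_subset[of b T] by auto
next
  assume "\<forall>c<b. x c = y c"
  moreover have "{..<b} \<subseteq> mdom x \<inter> mdom y"
    using assms[THEN matching_defined_below] by (auto simp: mdom_def)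
  ultimately show "mf_eq b x y" unfolding mf_eq_def using covering_lessThan[of b] by blast
qed

lemma mem_mf_class_iff:
  assumes "matching G (b::'a::{complete_linorder,dense_order}) x"
  shows "z \<in> mf_class G b x \<longleftrightarrow> matching G b z \<and> (\<forall>c<b. x c = z c)"
  using assms by (auto simp: mf_class_def mf_eq_iff_agree_below)

lemma mf_class_self: "matching G (b::'a::{complete_linorder,dense_order}) x \<Longrightarrow> x \<in> mf_class G b x"
  by (simp add: mem_mf_class_iff)

lemma mf_class_eq_iff:
  assumes "matching G (b::'a::{complete_linorder,dense_order}) x" "matching G b y"
  shows "mf_class G b x = mf_class G b y \<longleftrightarrow> (\<forall>c<b. x c = y c)"
proof
  assume "mf_class G b x = mf_class G b y"
  then have "y \<in> mf_class G b x" using mf_class_self[OF assms(2)] by simp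
  then show "\<forall>c<b. x c = y c" using assms(1) by (simp add: mem_mf_class_iff)
qed (use assms in \<open>auto simp: mf_class_def mf_eq_iff_agree_below\<close>)

section \<open>The plus construction\<close>

lemma Lplus_simps: "fst (Lplus G) = plus_obj G" "snd (Lplus G) = plus_res G"
  by (simp_all add: Lplus_def)

lemma mem_plus_obj_iff: "X \<in> plus_obj G a \<longleftrightarrow> (\<exists>x. matching G a x \<and> X = mf_class G a x)"
  by (simp add: plus_obj_def)

lemma matching_mf_res:
  assumes m: "matching G (a::'a::complete_linorder) y" and ba: "b \<le> a"
  shows "matching G b (mf_res b y)"
proof -
  have "covering b (mdom (mf_res b y))"
  proof (cases "b < a")
    case True
    then have "mdom (mf_res b y) = {..b}"
      using matching_defined_below[OF m] by (auto simp: mdom_def mf_res_def)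
    then show ?thesis using covering_atMost by simp
  next
    case False
    then have "b = a" "mdom (mf_res b y) = mdom y"
      using ba matching_defined_le[OF m] by (auto simp: mdom_def mf_res_def)
    then show ?thesis using m by (simp add: matching_def)
  qed
  then show ?thesis using m unfolding matching_def by (auto simp: mdom_def mf_res_def)
qed

lemma mf_res_mf_res: "c \<le> b \<Longrightarrow> mf_res c (mf_res b x) = mf_res c x"
  by (auto simp: mf_res_def fun_eq_iff)

lemma mf_res_self: "matching G a x \<Longrightarrow> mf_res a x = x"
  by (auto simp: mf_res_def fun_eq_iff) (metis matching_defined_le)

lemma plus_res_mf_class:
  assumes m: "matching G (a::'a::{complete_linorder,dense_order}) y" and ba: "b \<le> a"
  shows "plus_res G a b (mf_class G a y) = mf_class G b (mf_res b y)"
proof -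
  have eq: "mf_class G b (mf_res b z) = mf_class G b (mf_res b y)" if "z \<in> mf_class G a y" for z
  proof -
    from that have mz: "matching G a z" and "\<forall>c<a. y c = z c" by (auto simp: mem_mf_class_iff[OF m])
    with ba show ?thesis
      using mf_class_eq_iff[OF matching_mf_res[OF mz ba] matching_mf_res[OF m ba]] by (auto simp: mf_res_def)
  qed
  show ?thesis unfolding plus_res_def
  proof (rule SUP_eq_const)
    show "mf_class G a y \<noteq> {}" using mf_class_self[OF m] by blast
  qed (rule eq)
qed

lemma presheaf_Lplus: "presheaf (Lplus (G::('a::{complete_linorder,dense_order}, 'b) psh))"
  unfolding presheaf_def Lplus_simps
proof (intro conjI allI impI)
  fix a b :: 'a and X
  assume ba: "b \<le> a" and "X \<in> plus_obj G a"
  then obtain x where m: "matching G a x" and X: "X = mf_class G a x" by (auto simp: mem_plus_obj_iff)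
  show "plus_res G a b X \<in> plus_obj G b"
    unfolding X plus_res_mf_class[OF m ba] mem_plus_obj_iff using matching_mf_res[OF m ba] by blast
next
  fix a :: 'a and X
  assume "X \<in> plus_obj G a"
  then obtain x where m: "matching G a x" and X: "X = mf_class G a x" by (auto simp: mem_plus_obj_iff)
  show "plus_res G a a X = X" unfolding X plus_res_mf_class[OF m order_refl] mf_res_self[OF m] ..
next
  fix a b c :: 'a and X
  assume cb: "c \<le> b" and ba: "b \<le> a" and "X \<in> plus_obj G a"
  then obtain x where m: "matching G a x" and X: "X = mf_class G a x" by (auto simp: mem_plus_obj_iff)
  show "plus_res G b c (plus_res G a b X) = plus_res G a c X"
    unfolding X plus_res_mf_class[OF m ba] plus_res_mf_class[OF matching_mf_res[OF m ba] cb]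
      plus_res_mf_class[OF m order_trans[OF cb ba]] mf_res_mf_res[OF cb] ..
qed

definition section_family :: "('a::order, 'b) psh \<Rightarrow> 'a \<Rightarrow> 'b \<Rightarrow> 'a \<Rightarrow> 'b option" where
  "section_family G a u = (\<lambda>b. if b \<le> a then Some (snd G a b u) else None)"

lemma plus_unit_eq: "plus_unit G a u = mf_class G a (section_family G a u)"
  by (simp add: plus_unit_def section_family_def)

lemma matching_section_family:
  assumes p: "presheaf G" and u: "u \<in> fst G (a::'a::complete_linorder)"
  shows "matching G a (section_family G a u)"
  unfolding matching_def
proof (intro conjI ballI allI impI)
  have "mdom (section_family G a u) = {..a}" by (auto simp: mdom_def section_family_def)
  then show "covering a (mdom (section_family G a u))" using covering_atMost by simp
next
  fix b assume "b \<in> mdom (section_family G a u)"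
  then have "b \<le> a" by (auto simp: mdom_def section_family_def split: if_splits)
  then show "the (section_family G a u b) \<in> fst G b"
    by (simp add: section_family_def presheaf_restrict_closed[OF p _ u])
next
  fix b c assume "b \<in> mdom (section_family G a u)" "c \<le> b"
  then have "b \<le> a" "c \<le> a" by (auto simp: mdom_def section_family_def split: if_splits)
  with \<open>c \<le> b\<close> show "snd G b c (the (section_family G a u b)) = the (section_family G a u c)"
    by (simp add: section_family_def presheaf_restrict_comp[OF p _ _ u])
qed

lemma mf_res_section_family:
  assumes p: "presheaf G" and u: "u \<in> fst G a" and ba: "b \<le> a"
  shows "mf_res b (section_family G a u) = section_family G b (snd G a b u)"
proof
  fix c
  show "mf_res b (section_family G a u) c = section_family G b (snd G a b u) c"
    using order_trans[of c b a] ba presheaf_restrict_comp[OF p _ ba u, of c]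
    by (simp add: mf_res_def section_family_def)
qed

lemma plus_unit_in_plus_obj:
  "presheaf G \<Longrightarrow> u \<in> fst G (a::'a::{complete_linorder,dense_order}) \<Longrightarrow> plus_unit G a u \<in> plus_obj G a"
  unfolding plus_unit_eq mem_plus_obj_iff by (blast intro: matching_section_family)

lemma plus_res_plus_unit:
  "presheaf G \<Longrightarrow> u \<in> fst G (a::'a::{complete_linorder,dense_order}) \<Longrightarrow> b \<le> a \<Longrightarrow>
    plus_res G a b (plus_unit G a u) = plus_unit G b (snd G a b u)"
  unfolding plus_unit_eq by (simp add: plus_res_mf_class[OF matching_section_family] mf_res_section_family)

lemma nat_trans_plus_unit:
  "presheaf (G::('a::{complete_linorder,dense_order}, 'b) psh) \<Longrightarrow> nat_trans G (Lplus G) (plus_unit G)"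
  unfolding nat_trans_def Lplus_simps
  by (simp add: presheaf_Lplus plus_unit_in_plus_obj plus_res_plus_unit)

lemma plus_unit_eq_iff:
  assumes p: "presheaf G" and u: "u \<in> fst G (a::'a::{complete_linorder,dense_order})" and v: "v \<in> fst G a"
  shows "plus_unit G a u = plus_unit G a v \<longleftrightarrow> (\<forall>c<a. snd G a c u = snd G a c v)"
  unfolding plus_unit_eq mf_class_eq_iff[OF matching_section_family[OF p u] matching_section_family[OF p v]]
  by (auto simp: section_family_def)

lemma plus_res_eq_plus_unit:
  assumes m: "matching G (s::'a::{complete_linorder,dense_order}) y" and rs: "r < s"
  shows "plus_res G s r (mf_class G s y) = plus_unit G r (the (y r))"
proof -
  have yr: "y r \<noteq> None" by (rule matching_defined_below[OF m rs])
  have "mf_res r y c = section_family G r (the (y r)) c" for c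
    using matching_downward_closed[OF m yr, of c]
    by (auto simp: mf_res_def section_family_def matching_restrict[OF m yr])
  then have "mf_res r y = section_family G r (the (y r))" ..
  then show ?thesis by (simp add: plus_res_mf_class[OF m less_imp_le[OF rs]] plus_unit_eq)
qed

definition mf_map :: "('a \<Rightarrow> 'b \<Rightarrow> 'c) \<Rightarrow> ('a \<Rightarrow> 'b option) \<Rightarrow> 'a \<Rightarrow> 'c option" where
  "mf_map h x = (\<lambda>b. map_option (h b) (x b))"

lemma matching_mf_map:
  assumes n: "nat_trans G H h" and m: "matching G a x"
  shows "matching H a (mf_map h x)"
proof -
  have md: "mdom (mf_map h x) = mdom x" by (auto simp: mdom_def mf_map_def)
  show ?thesis unfolding matching_def md
  proof (intro conjI ballI allI impI)
    show "covering a (mdom x)" using m by (simp add: matching_def)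
  next
    fix b assume "b \<in> mdom x"
    then have xb: "x b \<noteq> None" by (simp add: mdom_def)
    then show "the (mf_map h x b) \<in> fst H b"
      using nat_trans_closed[OF n matching_closed[OF m xb]] by (auto simp: mf_map_def)
  next
    fix b c assume "b \<in> mdom x" and cb: "c \<le> b"
    then have xb: "x b \<noteq> None" by (simp add: mdom_def)
    have xc: "x c \<noteq> None" using matching_downward_closed[OF m xb cb] .
    have "snd H b c (h b (the (x b))) = h c (the (x c))"
      using nat_trans_natural[OF n cb matching_closed[OF m xb]] matching_restrict[OF m xb cb] by simp
    then show "snd H b c (the (mf_map h x b)) = the (mf_map h x c)"
      using xb xc by (auto simp: mf_map_def)
  qed
qed

lemma plus_map_mf_class:
  assumes n: "nat_trans G H h" and m: "matching G (a::'a::{complete_linorder,dense_order}) x"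
  shows "plus_map H h a (mf_class G a x) = mf_class H a (mf_map h x)"
proof -
  have eq: "mf_class H a (mf_map h z) = mf_class H a (mf_map h x)" if "z \<in> mf_class G a x" for z
  proof -
    from that have mz: "matching G a z" and "\<forall>c<a. x c = z c" by (auto simp: mem_mf_class_iff[OF m])
    then have "\<forall>c<a. mf_map h z c = mf_map h x c" by (simp add: mf_map_def)
    then show ?thesis by (simp add: mf_class_eq_iff[OF matching_mf_map[OF n mz] matching_mf_map[OF n m]])
  qed
  have "plus_map H h a (mf_class G a x) = (\<Union>z\<in>mf_class G a x. mf_class H a (mf_map h z))"
    by (simp add: plus_map_def mf_map_def)
  also have "\<dots> = mf_class H a (mf_map h x)"
  proof (rule SUP_eq_const)
    show "mf_class G a x \<noteq> {}" using mf_class_self[OF m] by blast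
  qed (rule eq)
  finally show ?thesis .
qed

lemma nat_trans_plus_map:
  assumes n: "nat_trans (G::('a::{complete_linorder,dense_order}, 'b) psh) H h"
  shows "nat_trans (Lplus G) (Lplus H) (plus_map H h)"
  unfolding nat_trans_def Lplus_simps
proof (intro conjI allI impI)
  show "presheaf (Lplus G)" "presheaf (Lplus H)" by (rule presheaf_Lplus)+
next
  fix a X assume "X \<in> plus_obj G a"
  then obtain x where m: "matching G a x" and X: "X = mf_class G a x" by (auto simp: mem_plus_obj_iff)
  show "plus_map H h a X \<in> plus_obj H a"
    unfolding X plus_map_mf_class[OF n m] mem_plus_obj_iff using matching_mf_map[OF n m] by blast
next
  fix a b X assume ba: "b \<le> a" and "X \<in> plus_obj G a"
  then obtain x where m: "matching G a x" and X: "X = mf_class G a x" by (auto simp: mem_plus_obj_iff)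
  have "mf_res b (mf_map h x) = mf_map h (mf_res b x)" by (auto simp: mf_res_def mf_map_def fun_eq_iff)
  then show "plus_map H h b (plus_res G a b X) = plus_res H a b (plus_map H h a X)"
    unfolding X plus_res_mf_class[OF m ba] plus_map_mf_class[OF n matching_mf_res[OF m ba]]
      plus_map_mf_class[OF n m] plus_res_mf_class[OF matching_mf_map[OF n m] ba] by simp
qed

lemma plus_map_plus_unit:
  assumes n: "nat_trans G H h" and u: "u \<in> fst G (a::'a::{complete_linorder,dense_order})"
  shows "plus_map H h a (plus_unit G a u) = plus_unit H a (h a u)"
proof -
  have "mf_map h (section_family G a u) b = section_family H a (h a u) b" for b
    using nat_trans_natural[OF n _ u, of b] by (simp add: mf_map_def section_family_def)
  then have "mf_map h (section_family G a u) = section_family H a (h a u)" ..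
  then show ?thesis
    unfolding plus_unit_eq plus_map_mf_class[OF n matching_section_family[OF nat_trans_presheaf_dom[OF n] u]] by simp
qed

section \<open>Local injectivity and local surjectivity\<close>

definition locally_injective :: "('a::order, 'b) psh \<Rightarrow> ('a \<Rightarrow> 'b \<Rightarrow> 'c) \<Rightarrow> bool" where
  "locally_injective G h \<longleftrightarrow> (\<forall>d c u u'. d < c \<longrightarrow> u \<in> fst G c \<longrightarrow> u' \<in> fst G c \<longrightarrow>
     h c u = h c u' \<longrightarrow> snd G c d u = snd G c d u')"

definition locally_surjective :: "('a::order, 'b) psh \<Rightarrow> ('a, 'c) psh \<Rightarrow> ('a \<Rightarrow> 'b \<Rightarrow> 'c) \<Rightarrow> bool" where
  "locally_surjective G H h \<longleftrightarrow> (\<forall>d c w. d < c \<longrightarrow> w \<in> fst H c \<longrightarrow>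
     (\<exists>r v. d < r \<and> r \<le> c \<and> v \<in> fst G r \<and> h r v = snd H c r w))"

lemma locally_injectiveD:
  "locally_injective G h \<Longrightarrow> d < c \<Longrightarrow> u \<in> fst G c \<Longrightarrow> u' \<in> fst G c \<Longrightarrow> h c u = h c u' \<Longrightarrow>
    snd G c d u = snd G c d u'"
  unfolding locally_injective_def by blast

lemma locally_surjectiveE:
  assumes "locally_surjective G H h" "d < c" "w \<in> fst H c"
  obtains r v where "d < r" "r \<le> c" "v \<in> fst G r" "h r v = snd H c r w"
  using assms unfolding locally_surjective_def by blast

lemma locally_injective_if_inj_on: "(\<And>a. inj_on (h a) (fst G a)) \<Longrightarrow> locally_injective G h"
  unfolding locally_injective_def by (auto dest: inj_onD)

lemma locally_surjective_if_surj_on: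
  "presheaf H \<Longrightarrow> (\<And>a. fst H a \<subseteq> h a ` fst G a) \<Longrightarrow> locally_surjective G H h"
  unfolding locally_surjective_def by (fastforce simp: presheaf_restrict_id)

lemma inj_on_plus_map:
  assumes n: "nat_trans G H h" and li: "locally_injective G h"
  shows "inj_on (plus_map H h b) (plus_obj G (b::'a::{complete_linorder,dense_order}))"
proof (rule inj_onI)
  fix X Y assume "X \<in> plus_obj G b" "Y \<in> plus_obj G b" and e: "plus_map H h b X = plus_map H h b Y"
  then obtain x y where mx: "matching G b x" and X: "X = mf_class G b x"
    and my: "matching G b y" and Y: "Y = mf_class G b y" by (auto simp: mem_plus_obj_iff)
  have hxy: "\<forall>c<b. mf_map h x c = mf_map h y c"
    using e unfolding X Y plus_map_mf_class[OF n mx] plus_map_mf_class[OF n my]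
      mf_class_eq_iff[OF matching_mf_map[OF n mx] matching_mf_map[OF n my]] .
  have "x d = y d" if db: "d < b" for d
  proof -
    obtain c where dc: "d < c" and cb: "c < b" using dense db by blast
    have xc: "x c \<noteq> None" and yc: "y c \<noteq> None"
      using matching_defined_below[OF mx cb] matching_defined_below[OF my cb] .
    have "h c (the (x c)) = h c (the (y c))" using hxy cb xc yc by (auto simp: mf_map_def)
    then have "snd G c d (the (x c)) = snd G c d (the (y c))"
      using locally_injectiveD[OF li dc matching_closed[OF mx xc] matching_closed[OF my yc]] by blast
    then have "the (x d) = the (y d)"
      using matching_restrict[OF mx xc, of d] matching_restrict[OF my yc, of d] dc by simp
    then show ?thesis
      using matching_defined_below[OF mx db] matching_defined_below[OF my db] by (metis option.collapse)
  qed
  then show "X = Y" unfolding X Y mf_class_eq_iff[OF mx my] by blast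
qed

text \<open>Two local preimages of the same matching family restrict to the same section: compare
  them on the smaller of their two stages, where local injectivity applies.\<close>

lemma local_preimages_agree:
  fixes c :: "'a::complete_linorder"
  assumes n: "nat_trans G H h" and li: "locally_injective G h" and mw: "matching H b w"
    and r: "c < r" "r \<le> b" "v \<in> fst G r" "w r \<noteq> None" "h r v = the (w r)"
    and r': "c < r'" "r' \<le> b" "v' \<in> fst G r'" "w r' \<noteq> None" "h r' v' = the (w r')"
  shows "snd G r c v = snd G r' c v'"
proof -
  have pG: "presheaf G" by (rule nat_trans_presheaf_dom[OF n])
  define m where "m = min r r'"
  have cm: "c < m" and mr: "m \<le> r" and mr': "m \<le> r'" using r r' by (auto simp: m_def)
  have "h m (snd G r m v) = the (w m)"
    using nat_trans_natural[OF n mr r(3)] r(5) matching_restrict[OF mw r(4) mr] by simp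
  moreover have "h m (snd G r' m v') = the (w m)"
    using nat_trans_natural[OF n mr' r'(3)] r'(5) matching_restrict[OF mw r'(4) mr'] by simp
  ultimately have "snd G m c (snd G r m v) = snd G m c (snd G r' m v')"
    using locally_injectiveD[OF li cm presheaf_restrict_closed[OF pG mr r(3)]
        presheaf_restrict_closed[OF pG mr' r'(3)]] by simp
  then show ?thesis
    using presheaf_restrict_comp[OF pG _ mr r(3), of c] presheaf_restrict_comp[OF pG _ mr' r'(3), of c] cm
    by simp
qed

lemma matching_local_lift:
  assumes ls: "locally_surjective G H h"
    and mw: "matching H (b::'a::{complete_linorder,dense_order}) w" and db: "d < b"
  shows "\<exists>r v. d < r \<and> r < b \<and> v \<in> fst G r \<and> h r v = the (w r)"
proof -
  obtain c where dc: "d < c" and cb: "c < b" using dense db by blast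
  have wc: "w c \<noteq> None" by (rule matching_defined_below[OF mw cb])
  obtain r v where r: "d < r" "r \<le> c" "v \<in> fst G r" "h r v = snd H c r (the (w c))"
    using locally_surjectiveE[OF ls dc matching_closed[OF mw wc]] .
  have "r < b" using r(2) cb by (rule le_less_trans)
  moreover have "h r v = the (w r)" using r(4) matching_restrict[OF mw wc r(2)] by simp
  ultimately show ?thesis using r(1,3) by blast
qed

lemma matching_preimage:
  assumes n: "nat_trans G H h" and li: "locally_injective G h" and ls: "locally_surjective G H h"
    and mw: "matching H (b::'a::{complete_linorder,dense_order}) w"
  obtains z where "matching G b z" "\<forall>d<b. mf_map h z d = w d"
proof -
  have pG: "presheaf G" by (rule nat_trans_presheaf_dom[OF n])
  obtain R V where RV: "\<And>d. d < b \<Longrightarrow>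
      d < R d \<and> R d < b \<and> V d \<in> fst G (R d) \<and> h (R d) (V d) = the (w (R d))"
    using matching_local_lift[OF ls mw] by metis
  define z where "z = (\<lambda>d. if d < b then Some (snd G (R d) d (V d)) else None)"
  have agree: "snd G (R c) c (V c) = snd G r c v"
    if "c < b" "c < r" "r < b" "v \<in> fst G r" "h r v = the (w r)" for c r v
    using RV[OF \<open>c < b\<close>] that matching_defined_below[OF mw, of "R c"] matching_defined_below[OF mw, of r]
    by (intro local_preimages_agree[OF n li mw]) (simp_all add: less_imp_le)
  have "matching G b z" unfolding matching_def
  proof (intro conjI ballI allI impI)
    have "mdom z = {..<b}" by (auto simp: mdom_def z_def)
    then show "covering b (mdom z)" using covering_lessThan by simp
  next
    fix d assume "d \<in> mdom z"
    then have "d < b" by (auto simp: mdom_def z_def split: if_splits)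
    then show "the (z d) \<in> fst G d"
      using RV presheaf_restrict_closed[OF pG, of d "R d" "V d"] by (simp add: z_def less_imp_le)
  next
    fix c' c assume "c' \<in> mdom z" and cc': "c \<le> c'"
    then have c'b: "c' < b" and cb: "c < b" by (auto simp: mdom_def z_def split: if_splits)
    have "snd G c' c (snd G (R c') c' (V c')) = snd G (R c') c (V c')"
      using RV[OF c'b] presheaf_restrict_comp[OF pG cc', of "R c'" "V c'"] by (simp add: less_imp_le)
    also have "\<dots> = snd G (R c) c (V c)"
      using RV[OF c'b] cc' by (intro agree[symmetric] cb) (auto intro: le_less_trans)
    finally show "snd G c' c (the (z c')) = the (z c)" using c'b cb by (simp add: z_def)
  qed
  moreover have "\<forall>d<b. mf_map h z d = w d"
  proof (intro allI impI)
    fix d assume db: "d < b"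
    have dR: "d \<le> R d" and Rb: "R d < b" and V: "V d \<in> fst G (R d)" and hV: "h (R d) (V d) = the (w (R d))"
      using RV[OF db] by auto
    have "h d (snd G (R d) d (V d)) = snd H (R d) d (the (w (R d)))"
      using nat_trans_natural[OF n dR V] hV by simp
    also have "\<dots> = the (w d)"
      by (rule matching_restrict[OF mw matching_defined_below[OF mw Rb] dR])
    finally show "mf_map h z d = w d" using db matching_defined_below[OF mw db] by (auto simp: mf_map_def z_def)
  qed
  ultimately show thesis by (rule that)
qed

lemma bij_betw_plus_map:
  assumes n: "nat_trans G H h" and li: "locally_injective G h" and ls: "locally_surjective G H h"
  shows "bij_betw (plus_map H h b) (plus_obj G b) (plus_obj H (b::'a::{complete_linorder,dense_order}))"
  unfolding bij_betw_def
proof (intro conjI inj_on_plus_map[OF n li] equalityI image_subsetI subsetI)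
  fix X assume "X \<in> plus_obj G b"
  then obtain x where m: "matching G b x" and X: "X = mf_class G b x" by (auto simp: mem_plus_obj_iff)
  show "plus_map H h b X \<in> plus_obj H b"
    unfolding X plus_map_mf_class[OF n m] mem_plus_obj_iff using matching_mf_map[OF n m] by blast
next
  fix Y assume "Y \<in> plus_obj H b"
  then obtain w where mw: "matching H b w" and Y: "Y = mf_class H b w" by (auto simp: mem_plus_obj_iff)
  obtain z where mz: "matching G b z" and zw: "\<forall>d<b. mf_map h z d = w d"
    by (rule matching_preimage[OF n li ls mw])
  have "Y = plus_map H h b (mf_class G b z)"
    unfolding Y plus_map_mf_class[OF n mz] mf_class_eq_iff[OF mw matching_mf_map[OF n mz]] using zw by simp
  moreover have "mf_class G b z \<in> plus_obj G b" using mz by (auto simp: mem_plus_obj_iff)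
  ultimately show "Y \<in> plus_map H h b ` plus_obj G b" by blast
qed

section \<open>Germs and stalks\<close>

lemma mem_germ_iff: "(t, v) \<in> germ G x s u \<longleftrightarrow> x < t \<and> v \<in> fst G t \<and>
    (\<exists>r. x < r \<and> r \<le> s \<and> r \<le> t \<and> snd G s r u = snd G t r v)"
  by (simp add: germ_def)

lemma germ_self: "x < s \<Longrightarrow> u \<in> fst G s \<Longrightarrow> (s, u) \<in> germ G x s u"
  unfolding mem_germ_iff by blast

lemma germ_in_stalk: "x < s \<Longrightarrow> u \<in> fst G s \<Longrightarrow> germ G x s u \<in> stalk G x"
  unfolding stalk_def by blast

lemma restrictions_agree_trans:
  fixes x :: "'a::linorder"
  assumes p: "presheaf G" and u: "u \<in> fst G s" and v: "v \<in> fst G t" and w: "w \<in> fst G q"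
    and r0: "x < r0" "r0 \<le> s" "r0 \<le> t" "snd G s r0 u = snd G t r0 v"
    and r1: "x < r1" "r1 \<le> t" "r1 \<le> q" "snd G t r1 v = snd G q r1 w"
  shows "\<exists>r. x < r \<and> r \<le> s \<and> r \<le> q \<and> snd G s r u = snd G q r w"
proof -
  define m where "m = min r0 r1"
  have m: "x < m" "m \<le> r0" "m \<le> r1" using r0 r1 by (auto simp: m_def)
  have "snd G s m u = snd G r0 m (snd G s r0 u)" using presheaf_restrict_comp[OF p m(2) r0(2) u] by simp
  also have "\<dots> = snd G t m v" using r0(4) presheaf_restrict_comp[OF p m(2) r0(3) v] by simp
  also have "\<dots> = snd G r1 m (snd G t r1 v)" using presheaf_restrict_comp[OF p m(3) r1(2) v] by simp
  also have "\<dots> = snd G q m w" using r1(4) presheaf_restrict_comp[OF p m(3) r1(3) w] by simp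
  finally show ?thesis using m r0 r1 by (meson order_trans)
qed

lemma germ_eq_if_mem:
  fixes x :: "'a::linorder"
  assumes p: "presheaf G" and u: "u \<in> fst G s" and tv: "(t, v) \<in> germ G x s u"
  shows "germ G x t v = germ G x s u"
proof -
  from tv obtain r0 where v: "v \<in> fst G t"
    and r0: "x < r0" "r0 \<le> s" "r0 \<le> t" "snd G s r0 u = snd G t r0 v"
    unfolding mem_germ_iff by blast
  show ?thesis
  proof (intro set_eqI iffI)
    fix z assume "z \<in> germ G x t v"
    then obtain t' v' r1 where z: "z = (t', v')" "x < t'" "v' \<in> fst G t'"
      and r1: "x < r1" "r1 \<le> t" "r1 \<le> t'" "snd G t r1 v = snd G t' r1 v'"
      unfolding germ_def by auto
    show "z \<in> germ G x s u"
      unfolding z mem_germ_iff using z restrictions_agree_trans[OF p u v z(3) r0 r1] by blast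
  next
    fix z assume "z \<in> germ G x s u"
    then obtain t' v' r1 where z: "z = (t', v')" "x < t'" "v' \<in> fst G t'"
      and r1: "x < r1" "r1 \<le> s" "r1 \<le> t'" "snd G s r1 u = snd G t' r1 v'"
      unfolding germ_def by auto
    show "z \<in> germ G x t v"
      unfolding z mem_germ_iff using z restrictions_agree_trans[OF p v u z(3) r0(1,3,2) r0(4)[symmetric] r1]
      by blast
  qed
qed

lemma germ_eq_iff:
  fixes x :: "'a::linorder"
  assumes p: "presheaf G" and "x < s" "u \<in> fst G s" and "x < t" "v \<in> fst G t"
  shows "germ G x s u = germ G x t v \<longleftrightarrow>
    (\<exists>r. x < r \<and> r \<le> s \<and> r \<le> t \<and> snd G s r u = snd G t r v)"
proof
  assume "germ G x s u = germ G x t v"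
  then have "(t, v) \<in> germ G x s u" using germ_self[of x t v G] assms by simp
  then show "\<exists>r. x < r \<and> r \<le> s \<and> r \<le> t \<and> snd G s r u = snd G t r v" by (simp add: mem_germ_iff)
next
  assume "\<exists>r. x < r \<and> r \<le> s \<and> r \<le> t \<and> snd G s r u = snd G t r v"
  then have "(t, v) \<in> germ G x s u" using assms by (simp add: mem_germ_iff)
  then show "germ G x s u = germ G x t v" using germ_eq_if_mem[OF p \<open>u \<in> fst G s\<close>] by simp
qed

lemma stalk_map_germ:
  fixes x :: "'a::linorder"
  assumes n: "nat_trans G H h" and xs: "x < s" and u: "u \<in> fst G s"
  shows "stalk_map H h x (germ G x s u) = germ H x s (h s u)"
  unfolding stalk_map_def
proof (rule SUP_eq_const)
  show "germ G x s u \<noteq> {}" using germ_self[OF xs u] by blast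
next
  fix z assume "z \<in> germ G x s u"
  then obtain t v r where z: "z = (t, v)" and tv: "x < t" "v \<in> fst G t"
    and r: "x < r" "r \<le> s" "r \<le> t" "snd G s r u = snd G t r v"
    unfolding germ_def by auto
  have "snd H s r (h s u) = snd H t r (h t v)"
    using nat_trans_natural[OF n r(2) u] nat_trans_natural[OF n r(3) tv(2)] r(4) by simp
  then have "germ H x s (h s u) = germ H x t (h t v)"
    using germ_eq_iff[OF nat_trans_presheaf_cod[OF n] xs nat_trans_closed[OF n u] tv(1) nat_trans_closed[OF n tv(2)]]
      r by blast
  then show "(case z of (t, v) \<Rightarrow> germ H x t (h t v)) = germ H x s (h s u)" by (simp add: z)
qed

lemma stalk_map_in_stalk:
  assumes n: "nat_trans G H h" and C: "C \<in> stalk G (x::'a::linorder)"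
  shows "stalk_map H h x C \<in> stalk H x"
proof -
  from C obtain s u where xs: "x < s" and u: "u \<in> fst G s" and "C = germ G x s u"
    unfolding stalk_def by blast
  then show ?thesis
    using stalk_map_germ[OF n xs u] germ_in_stalk[OF xs nat_trans_closed[OF n u]] by simp
qed

lemma stalk_map_cong:
  assumes "\<And>a u. u \<in> fst G a \<Longrightarrow> h a u = h' a u" and "C \<in> stalk G x"
  shows "stalk_map H h x C = stalk_map H h' x C"
proof -
  from assms(2) obtain s u where C: "C = germ G x s u" unfolding stalk_def by blast
  show ?thesis unfolding stalk_map_def
  proof (rule SUP_cong[OF refl])
    fix z assume "z \<in> C"
    then obtain t v where "z = (t, v)" "v \<in> fst G t" unfolding C germ_def by auto
    then show "(case z of (t, v) \<Rightarrow> germ H x t (h t v)) = (case z of (t, v) \<Rightarrow> germ H x t (h' t v))"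
      using assms(1) by simp
  qed
qed

lemma stalk_map_comp:
  assumes n1: "nat_trans G H h" and n2: "nat_trans H K k" and C: "C \<in> stalk G (x::'a::linorder)"
  shows "stalk_map K (\<lambda>a u. k a (h a u)) x C = stalk_map K k x (stalk_map H h x C)"
proof -
  from C obtain s u where xs: "x < s" and u: "u \<in> fst G s" and "C = germ G x s u"
    unfolding stalk_def by blast
  then show ?thesis
    by (simp add: stalk_map_germ[OF nat_trans_comp[OF n1 n2] xs u] stalk_map_germ[OF n1 xs u]
        stalk_map_germ[OF n2 xs nat_trans_closed[OF n1 u]])
qed

lemma stalk_map_id:
  assumes p: "presheaf G" and C: "C \<in> stalk G (x::'a::linorder)"
  shows "stalk_map G (\<lambda>a u. u) x C = C"
proof -
  from C obtain s u where xs: "x < s" and u: "u \<in> fst G s" and "C = germ G x s u"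
    unfolding stalk_def by blast
  then show ?thesis using stalk_map_germ[OF nat_trans_id[OF p] xs u] by simp
qed

lemma stalk_map_inverse:
  assumes n: "nat_trans G H h" and ng: "nat_trans H G g"
    and gh: "\<And>a u. u \<in> fst G a \<Longrightarrow> g a (h a u) = u" and C: "C \<in> stalk G (x::'a::linorder)"
  shows "stalk_map G g x (stalk_map H h x C) = C"
proof -
  have "stalk_map G g x (stalk_map H h x C) = stalk_map G (\<lambda>a u. g a (h a u)) x C"
    by (rule stalk_map_comp[OF n ng C, symmetric])
  also have "\<dots> = stalk_map G (\<lambda>a u. u) x C" using gh C by (rule stalk_map_cong)
  also have "\<dots> = C" by (rule stalk_map_id[OF nat_trans_presheaf_dom[OF n] C])
  finally show ?thesis .
qed

lemma bij_betw_stalk_map_psh_iso: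
  assumes "psh_iso G H h"
  shows "bij_betw (stalk_map H h x) (stalk G (x::'a::linorder)) (stalk H x)"
proof -
  from assms obtain g where n: "nat_trans G H h" and ng: "nat_trans H G g"
    and gh: "\<And>a u. u \<in> fst G a \<Longrightarrow> g a (h a u) = u"
    and hg: "\<And>a v. v \<in> fst H a \<Longrightarrow> h a (g a v) = v"
    unfolding psh_iso_def by blast
  show ?thesis
  proof (rule bij_betw_byWitness[where f' = "stalk_map G g x"])
    show "\<forall>C\<in>stalk G x. stalk_map G g x (stalk_map H h x C) = C"
      using stalk_map_inverse[OF n ng gh] by blast
    show "\<forall>D\<in>stalk H x. stalk_map H h x (stalk_map G g x D) = D"
      using stalk_map_inverse[OF ng n hg] by blast
    show "stalk_map H h x ` stalk G x \<subseteq> stalk H x" "stalk_map G g x ` stalk H x \<subseteq> stalk G x"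
      using stalk_map_in_stalk[OF n] stalk_map_in_stalk[OF ng] by blast+
  qed
qed

section \<open>Stalks of the plus construction\<close>

lemma inj_on_stalk_map_plus_unit:
  fixes G :: "('a::{complete_linorder,dense_order}, 'b) psh"
  assumes p: "presheaf G"
  shows "inj_on (stalk_map (Lplus G) (plus_unit G) x) (stalk G x)"
proof (rule inj_onI)
  have n: "nat_trans G (Lplus G) (plus_unit G)" by (rule nat_trans_plus_unit[OF p])
  fix C D assume "C \<in> stalk G x" "D \<in> stalk G x"
    and e: "stalk_map (Lplus G) (plus_unit G) x C = stalk_map (Lplus G) (plus_unit G) x D"
  then obtain s u t v where xs: "x < s" and u: "u \<in> fst G s" and C: "C = germ G x s u"
    and xt: "x < t" and v: "v \<in> fst G t" and D: "D = germ G x t v"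
    unfolding stalk_def by blast
  have "germ (Lplus G) x s (plus_unit G s u) = germ (Lplus G) x t (plus_unit G t v)"
    using e unfolding C D stalk_map_germ[OF n xs u] stalk_map_germ[OF n xt v] .
  then obtain r where r: "x < r" "r \<le> s" "r \<le> t"
    and "plus_res G s r (plus_unit G s u) = plus_res G t r (plus_unit G t v)"
    unfolding germ_eq_iff[OF presheaf_Lplus xs nat_trans_closed[OF n u] xt nat_trans_closed[OF n v]]
      Lplus_simps by blast
  then have "plus_unit G r (snd G s r u) = plus_unit G r (snd G t r v)"
    by (simp add: plus_res_plus_unit[OF p u] plus_res_plus_unit[OF p v])
  then have agree: "\<forall>c<r. snd G r c (snd G s r u) = snd G r c (snd G t r v)"
    by (simp add: plus_unit_eq_iff[OF p presheaf_restrict_closed[OF p r(2) u]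
          presheaf_restrict_closed[OF p r(3) v]])
  obtain c where xc: "x < c" and cr: "c < r" using dense r(1) by blast
  have "snd G s c u = snd G t c v"
    using agree cr presheaf_restrict_comp[OF p _ r(2) u, of c] presheaf_restrict_comp[OF p _ r(3) v, of c]
    by simp
  then show "C = D"
    unfolding C D germ_eq_iff[OF p xs u xt v] using xc cr r by (meson less_imp_le order_trans)
qed

lemma stalk_Lplus_subset_image:
  fixes G :: "('a::{complete_linorder,dense_order}, 'b) psh"
  assumes p: "presheaf G"
  shows "stalk (Lplus G) x \<subseteq> stalk_map (Lplus G) (plus_unit G) x ` stalk G x"
proof
  have n: "nat_trans G (Lplus G) (plus_unit G)" by (rule nat_trans_plus_unit[OF p])
  fix Y assume "Y \<in> stalk (Lplus G) x"
  then obtain s y where xs: "x < s" and my: "matching G s y"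
    and Y: "Y = germ (Lplus G) x s (mf_class G s y)"
    unfolding stalk_def Lplus_simps mem_plus_obj_iff by blast
  obtain r where xr: "x < r" and rs: "r < s" using dense xs by blast
  have yr: "y r \<noteq> None" by (rule matching_defined_below[OF my rs])
  define w where "w = the (y r)"
  have w: "w \<in> fst G r" unfolding w_def by (rule matching_closed[OF my yr])
  have X: "mf_class G s y \<in> fst (Lplus G) s" using my by (auto simp: Lplus_simps mem_plus_obj_iff)
  have uw: "plus_unit G r w \<in> fst (Lplus G) r"
    unfolding Lplus_simps by (rule plus_unit_in_plus_obj[OF p w])
  have "plus_res G s r (mf_class G s y) = plus_res G r r (plus_unit G r w)"
    using plus_res_eq_plus_unit[OF my rs] presheaf_restrict_id[OF presheaf_Lplus uw]
    by (simp add: w_def Lplus_simps)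
  then have "Y = germ (Lplus G) x r (plus_unit G r w)"
    unfolding Y germ_eq_iff[OF presheaf_Lplus xs X xr uw] Lplus_simps
    using xr rs by (intro exI[of _ r]) simp
  also have "\<dots> = stalk_map (Lplus G) (plus_unit G) x (germ G x r w)"
    by (rule stalk_map_germ[OF n xr w, symmetric])
  finally show "Y \<in> stalk_map (Lplus G) (plus_unit G) x ` stalk G x"
    using germ_in_stalk[OF xr w] by blast
qed

lemma bij_betw_stalk_map_plus_unit:
  fixes G :: "('a::{complete_linorder,dense_order}, 'b) psh"
  assumes p: "presheaf G"
  shows "bij_betw (stalk_map (Lplus G) (plus_unit G) x) (stalk G x) (stalk (Lplus G) x)"
  unfolding bij_betw_def
  using inj_on_stalk_map_plus_unit[OF p] stalk_Lplus_subset_image[OF p]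
    stalk_map_in_stalk[OF nat_trans_plus_unit[OF p]] by blast

section \<open>Isomorphisms of associated sheaves\<close>

lemma psh_iso_if_bij_betw:
  assumes n: "nat_trans G H h" and bij: "\<And>a. bij_betw (h a) (fst G a) (fst H a)"
  shows "psh_iso G H h"
proof -
  define g where "g a = the_inv_into (fst G a) (h a)" for a
  have g: "g a v \<in> fst G a" if "v \<in> fst H a" for a v
    unfolding g_def using bij_betwE[OF bij_betw_the_inv_into[OF bij[of a]]] that by blast
  have hg: "h a (g a v) = v" if "v \<in> fst H a" for a v
    unfolding g_def using f_the_inv_into_f_bij_betw[OF bij[of a] that] .
  have gh: "g a (h a u) = u" if "u \<in> fst G a" for a u
    unfolding g_def using the_inv_into_f_f[OF bij_betw_imp_inj_on[OF bij] that] .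
  have "g b (snd H a b v) = snd G a b (g a v)" if ba: "b \<le> a" and v: "v \<in> fst H a" for a b v
  proof -
    have "g b (snd H a b v) = g b (snd H a b (h a (g a v)))" using hg[OF v] by simp
    also have "\<dots> = g b (h b (snd G a b (g a v)))" using nat_trans_natural[OF n ba g[OF v]] by simp
    also have "\<dots> = snd G a b (g a v)"
      using gh presheaf_restrict_closed[OF nat_trans_presheaf_dom[OF n] ba g[OF v]] by simp
    finally show ?thesis .
  qed
  then have "nat_trans H G g"
    using g nat_trans_presheaf_dom[OF n] nat_trans_presheaf_cod[OF n] by (simp add: nat_trans_def)
  then show ?thesis unfolding psh_iso_def using n gh hg by blast
qed

lemma nat_trans_eta:
  "presheaf (F::('a::{complete_linorder,dense_order}, 'b) psh) \<Longrightarrow> nat_trans F (L2 F) (eta F)"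
  unfolding L2_def eta_def[abs_def] by (rule nat_trans_comp[OF nat_trans_plus_unit nat_trans_plus_unit[OF presheaf_Lplus]])

lemma bij_betw_stalk_map_eta:
  fixes F :: "('a::{complete_linorder,dense_order}, 'b) psh"
  assumes p: "presheaf F"
  shows "bij_betw (stalk_map (L2 F) (eta F) x) (stalk F x) (stalk (L2 F) x)"
proof -
  have n1: "nat_trans F (Lplus F) (plus_unit F)" by (rule nat_trans_plus_unit[OF p])
  have n2: "nat_trans (Lplus F) (L2 F) (plus_unit (Lplus F))"
    unfolding L2_def by (rule nat_trans_plus_unit[OF presheaf_Lplus])
  have "bij_betw (stalk_map (L2 F) (plus_unit (Lplus F)) x \<circ> stalk_map (Lplus F) (plus_unit F) x)
      (stalk F x) (stalk (L2 F) x)"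
    unfolding L2_def
    by (rule bij_betw_trans[OF bij_betw_stalk_map_plus_unit[OF p] bij_betw_stalk_map_plus_unit[OF presheaf_Lplus]])
  moreover have "(stalk_map (L2 F) (plus_unit (Lplus F)) x \<circ> stalk_map (Lplus F) (plus_unit F) x) C =
      stalk_map (L2 F) (eta F) x C" if "C \<in> stalk F x" for C
    using stalk_map_comp[OF n1 n2 that] by (simp add: eta_def[abs_def])
  ultimately show ?thesis using bij_betw_cong by blast
qed

lemma L2_map_eta:
  fixes E :: "('a::{complete_linorder,dense_order}, 'b) psh"
  assumes n: "nat_trans E F f" and u: "u \<in> fst E a"
  shows "L2_map F f a (eta E a u) = eta F a (f a u)"
proof -
  have "plus_unit E a u \<in> fst (Lplus E) a"
    unfolding Lplus_simps by (rule plus_unit_in_plus_obj[OF nat_trans_presheaf_dom[OF n] u])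
  then show ?thesis
    unfolding L2_map_def eta_def by (simp add: plus_map_plus_unit[OF nat_trans_plus_map[OF n]] plus_map_plus_unit[OF n u])
qed

lemma locally_injective_if_stalk_inj:
  fixes E :: "('a::{complete_linorder,dense_order}, 'b) psh"
  assumes n: "nat_trans E F f" and inj: "\<And>x. x \<noteq> top \<Longrightarrow> inj_on (stalk_map F f x) (stalk E x)"
  shows "locally_injective E f"
  unfolding locally_injective_def
proof (intro allI impI)
  fix d c u u' assume dc: "d < c" and u: "u \<in> fst E c" and u': "u' \<in> fst E c" and e: "f c u = f c u'"
  have pE: "presheaf E" by (rule nat_trans_presheaf_dom[OF n])
  have "d \<noteq> top" using dc top_greatest[of c] by auto
  moreover have "stalk_map F f d (germ E d c u) = stalk_map F f d (germ E d c u')"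
    using e by (simp add: stalk_map_germ[OF n dc u] stalk_map_germ[OF n dc u'])
  ultimately have "germ E d c u = germ E d c u'"
    using inj_onD[OF inj] germ_in_stalk[OF dc u] germ_in_stalk[OF dc u'] by blast
  then obtain r where r: "d < r" "r \<le> c" "snd E c r u = snd E c r u'"
    unfolding germ_eq_iff[OF pE dc u dc u'] by blast
  then show "snd E c d u = snd E c d u'"
    using presheaf_restrict_comp[OF pE _ r(2) u, of d] presheaf_restrict_comp[OF pE _ r(2) u', of d] by simp
qed

lemma locally_surjective_if_stalk_surj:
  fixes E :: "('a::{complete_linorder,dense_order}, 'b) psh"
  assumes n: "nat_trans E F f" and surj: "\<And>x. x \<noteq> top \<Longrightarrow> stalk F x \<subseteq> stalk_map F f x ` stalk E x"
  shows "locally_surjective E F f"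
  unfolding locally_surjective_def
proof (intro allI impI)
  fix d c w assume dc: "d < c" and w: "w \<in> fst F c"
  have "d \<noteq> top" using dc top_greatest[of c] by auto
  then obtain C where C: "C \<in> stalk E d" and wC: "germ F d c w = stalk_map F f d C"
    using surj germ_in_stalk[OF dc w] by blast
  from C obtain s u where ds: "d < s" and u: "u \<in> fst E s" and "C = germ E d s u"
    unfolding stalk_def by blast
  with wC have "germ F d c w = germ F d s (f s u)" by (simp add: stalk_map_germ[OF n])
  then obtain r where r: "d < r" "r \<le> c" "r \<le> s" "snd F c r w = snd F s r (f s u)"
    unfolding germ_eq_iff[OF nat_trans_presheaf_cod[OF n] dc w ds nat_trans_closed[OF n u]] by blast
  have "f r (snd E s r u) = snd F c r w" using nat_trans_natural[OF n r(3) u] r(4) by simp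
  then show "\<exists>r v. d < r \<and> r \<le> c \<and> v \<in> fst E r \<and> f r v = snd F c r w"
    using r presheaf_restrict_closed[OF nat_trans_presheaf_dom[OF n] r(3) u] by blast
qed

lemma psh_iso_L2_map_if_stalk_bij:
  fixes E :: "('a::{complete_linorder,dense_order}, 'b) psh"
  assumes n: "nat_trans E F f"
    and bij: "\<And>x. x \<noteq> top \<Longrightarrow> bij_betw (stalk_map F f x) (stalk E x) (stalk F x)"
  shows "psh_iso (L2 E) (L2 F) (L2_map F f)"
proof -
  have "locally_injective E f"
    using locally_injective_if_stalk_inj[OF n] bij bij_betw_imp_inj_on by blast
  moreover have "locally_surjective E F f"
    using locally_surjective_if_stalk_surj[OF n] bij bij_betw_imp_surj_on by (metis order_refl)
  ultimately have bij1: "bij_betw (plus_map F f a) (fst (Lplus E) a) (fst (Lplus F) a)" for a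
    unfolding Lplus_simps by (rule bij_betw_plus_map[OF n])
  have n1: "nat_trans (Lplus E) (Lplus F) (plus_map F f)" by (rule nat_trans_plus_map[OF n])
  have "locally_injective (Lplus E) (plus_map F f)"
    by (rule locally_injective_if_inj_on) (rule bij_betw_imp_inj_on[OF bij1])
  moreover have "locally_surjective (Lplus E) (Lplus F) (plus_map F f)"
    by (rule locally_surjective_if_surj_on[OF presheaf_Lplus]) (simp add: bij_betw_imp_surj_on[OF bij1])
  ultimately have "bij_betw (L2_map F f a) (fst (L2 E) a) (fst (L2 F) a)" for a
    unfolding L2_def L2_map_def Lplus_simps[of "Lplus E"] Lplus_simps[of "Lplus F"]
    by (rule bij_betw_plus_map[OF n1])
  then show ?thesis
    using psh_iso_if_bij_betw[OF nat_trans_plus_map[OF n1]] by (simp add: L2_def L2_map_def)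
qed

lemma stalk_bij_if_psh_iso_L2_map:
  fixes E :: "('a::{complete_linorder,dense_order}, 'b) psh"
  assumes n: "nat_trans E F f" and iso: "psh_iso (L2 E) (L2 F) (L2_map F f)"
  shows "bij_betw (stalk_map F f x) (stalk E x) (stalk F x)"
proof -
  have nL: "nat_trans (L2 E) (L2 F) (L2_map F f)" using iso by (simp add: psh_iso_def)
  have etaE: "nat_trans E (L2 E) (eta E)" and etaF: "nat_trans F (L2 F) (eta F)"
    using nat_trans_eta n[THEN nat_trans_presheaf_dom] n[THEN nat_trans_presheaf_cod] by blast+
  have square: "(stalk_map (L2 F) (L2_map F f) x \<circ> stalk_map (L2 E) (eta E) x) C =
      (stalk_map (L2 F) (eta F) x \<circ> stalk_map F f x) C" if C: "C \<in> stalk E x" for C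
  proof -
    have "(stalk_map (L2 F) (L2_map F f) x \<circ> stalk_map (L2 E) (eta E) x) C
        = stalk_map (L2 F) (\<lambda>a u. L2_map F f a (eta E a u)) x C"
      using stalk_map_comp[OF etaE nL C] by simp
    also have "\<dots> = stalk_map (L2 F) (\<lambda>a u. eta F a (f a u)) x C"
      using L2_map_eta[OF n] C by (rule stalk_map_cong)
    also have "\<dots> = (stalk_map (L2 F) (eta F) x \<circ> stalk_map F f x) C"
      using stalk_map_comp[OF n etaF C] by simp
    finally show ?thesis .
  qed
  have "bij_betw (stalk_map (L2 F) (L2_map F f) x \<circ> stalk_map (L2 E) (eta E) x) (stalk E x) (stalk (L2 F) x)"
    by (rule bij_betw_trans[OF bij_betw_stalk_map_eta bij_betw_stalk_map_psh_iso[OF iso]])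
      (rule nat_trans_presheaf_dom[OF n])
  then have "bij_betw (stalk_map (L2 F) (eta F) x \<circ> stalk_map F f x) (stalk E x) (stalk (L2 F) x)"
    using square bij_betw_cong by blast
  moreover have "stalk_map F f x ` stalk E x \<subseteq> stalk F x" using stalk_map_in_stalk[OF n] by blast
  ultimately show ?thesis
    using bij_betw_comp_iff2[OF bij_betw_stalk_map_eta[OF nat_trans_presheaf_cod[OF n]]] by blast
qed

theorem lemma34:
  shows "(\<forall>F :: ('a::{complete_linorder, dense_order}, 'b) psh. presheaf F \<longrightarrow>
            (\<forall>x. x \<noteq> top \<longrightarrow>
               bij_betw (stalk_map (L2 F) (eta F) x) (stalk F x) (stalk (L2 F) x)))
       \<and> (\<forall>(E :: ('a, 'c) psh) (F :: ('a, 'd) psh) f. nat_trans E F f \<longrightarrow>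
            ((\<forall>x. x \<noteq> top \<longrightarrow> bij_betw (stalk_map F f x) (stalk E x) (stalk F x))
             \<longleftrightarrow> psh_iso (L2 E) (L2 F) (L2_map F f)))"
  using bij_betw_stalk_map_eta psh_iso_L2_map_if_stalk_bij stalk_bij_if_psh_iso_L2_map by blast

end
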